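(* Let $K\ge 2$ and let $g(\mathbf{x})=\sum_{j=1}^K \pi_j\,\phi(\mathbf{x};\boldsymbol{\mu}_j,\Sigma_j)$, $\mathbf{x}\in\mathbb{R}^D$, be a mixture of $D$-variate normal densities with $\pi_j\in[0,1]$, $\sum_j\pi_j=1$ and positive definite $\Sigma_j$. Fix $\boldsymbol{\alpha}\in\mathcal{S}_K$ and let $\mathbf{w}\in\mathbf{W}$ (defined below). Then along the line $\{\mathbf{x}^*(\boldsymbol{\alpha})+\delta\mathbf{w}:\delta\in\mathbb{R}\}$ the function $g$ attains its maximum value at $\delta=0$.
   Context: $\phi(\mathbf{x};\boldsymbol{\mu},\Sigma)$ is the normal density with mean $\boldsymbol{\mu}$ and covariance $\Sigma$. $\mathcal{S}_K=\{\boldsymbol{\alpha}\in\mathbb{R}^K:\alpha_i\in[0,1],\sum_i\alpha_i=1\}$. The ridgeline function is $\mathbf{x}^*(\boldsymbol{\alpha})=S_{\boldsymbol{\alpha}}^{-1}\sum_{j=1}^K\alpha_j\Sigma_j^{-1}\boldsymbol{\mu}_j$, where $S_{\boldsymbol{\alpha}}=\sum_{j=1}^K\alpha_j\Sigma_j^{-1}$. Set $\mathbf{v}_j=\Sigma_j^{-1}(\mathbf{x}^*(\boldsymbol{\alpha})-\boldsymbol{\mu}_j)$ for $j=1,\dots,K$, and $\mathbf{d}_j=S_{\boldsymbol{\alpha}}^{-1}(\mathbf{v}_j-\mathbf{v}_K)$ for $j=1,\dots,K-1$ (the derivative vectors of $\mathbf{x}^*$ with respect to $\alpha_1,\dots,\alpha_{K-1}$).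 Define $\mathbf{W}=\{\mathbf{w}\in\mathbb{R}^D:\mathbf{w}'S_{\boldsymbol{\alpha}}\mathbf{d}_j=0\text{ for all }j=1,\dots,K-1\}$. *)

theory Defs
  imports "HOL-Analysis.Analysis"
begin

text \<open>Components are indexed by j in {0..<K} (paper: 1..K); the paper's index K is K-1 here.\<close>

definition pos_def_mat :: "real^'n^'n \<Rightarrow> bool" where
  "pos_def_mat A \<longleftrightarrow> transpose A = A \<and> (\<forall>x. x \<noteq> 0 \<longrightarrow> x \<bullet> (A *v x) > 0)"

definition normal_density :: "real^'n \<Rightarrow> real^'n^'n \<Rightarrow> real^'n \<Rightarrow> real" where
  "normal_density mu Sig x =
     exp (- (1/2) * ((x - mu) \<bullet> (matrix_inv Sig *v (x - mu))))
     / sqrt ((2 * pi) ^ CARD('n) * det Sig)"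

definition mixture_density ::
  "nat \<Rightarrow> (nat \<Rightarrow> real) \<Rightarrow> (nat \<Rightarrow> real^'n) \<Rightarrow> (nat \<Rightarrow> real^'n^'n) \<Rightarrow> real^'n \<Rightarrow> real" where
  "mixture_density K p mu Sig x = (\<Sum>j<K. p j * normal_density (mu j) (Sig j) x)"

definition prob_simplex :: "nat \<Rightarrow> (nat \<Rightarrow> real) \<Rightarrow> bool" where
  "prob_simplex K a \<longleftrightarrow> (\<forall>j<K. 0 \<le> a j \<and> a j \<le> 1) \<and> (\<Sum>j<K. a j) = 1"

definition S_alpha :: "nat \<Rightarrow> (nat \<Rightarrow> real) \<Rightarrow> (nat \<Rightarrow> real^'n^'n) \<Rightarrow> real^'n^'n" where
  "S_alpha K a Sig = (\<Sum>j<K. a j *\<^sub>R matrix_inv (Sig j))"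

definition ridgeline ::
  "nat \<Rightarrow> (nat \<Rightarrow> real) \<Rightarrow> (nat \<Rightarrow> real^'n) \<Rightarrow> (nat \<Rightarrow> real^'n^'n) \<Rightarrow> real^'n" where
  "ridgeline K a mu Sig =
     matrix_inv (S_alpha K a Sig) *v (\<Sum>j<K. a j *\<^sub>R (matrix_inv (Sig j) *v mu j))"

definition ridge_v ::
  "nat \<Rightarrow> (nat \<Rightarrow> real) \<Rightarrow> (nat \<Rightarrow> real^'n) \<Rightarrow> (nat \<Rightarrow> real^'n^'n) \<Rightarrow> nat \<Rightarrow> real^'n" where
  "ridge_v K a mu Sig j = matrix_inv (Sig j) *v (ridgeline K a mu Sig - mu j)"

definition ridge_d ::
  "nat \<Rightarrow> (nat \<Rightarrow> real) \<Rightarrow> (nat \<Rightarrow> real^'n) \<Rightarrow> (nat \<Rightarrow> real^'n^'n) \<Rightarrow> nat \<Rightarrow> real^'n" where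
  "ridge_d K a mu Sig j =
     matrix_inv (S_alpha K a Sig) *v (ridge_v K a mu Sig j - ridge_v K a mu Sig (K - 1))"

definition W_set ::
  "nat \<Rightarrow> (nat \<Rightarrow> real) \<Rightarrow> (nat \<Rightarrow> real^'n) \<Rightarrow> (nat \<Rightarrow> real^'n^'n) \<Rightarrow> (real^'n) set" where
  "W_set K a mu Sig =
     {w. \<forall>j < K - 1. w \<bullet> (S_alpha K a Sig *v ridge_d K a mu Sig j) = 0}"

end

theory Submission
  imports Defs
begin

text \<open>
  At the ridgeline point x* the weighted sum of the vectors v_j = Sig_j^-1 (x* - mu_j) with
  weights alpha_j vanishes, since S_alpha x* = sum_j alpha_j Sig_j^-1 mu_j. A direction w in W
  is orthogonal to every difference v_j - v_K, so w . v_j takes a common value c, and then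
  c = sum_j alpha_j (w . v_j) = 0. Hence along x* + delta w each Mahalanobis distance
  (x - mu_j)' Sig_j^-1 (x - mu_j) equals its value at x* plus delta^2 w' Sig_j^-1 w, so every
  component density, and therefore the mixture, is largest at delta = 0.
\<close>

lemma matrix_inv_right:
  fixes A :: "'a::semiring_1^'n^'m"
  assumes "invertible A"
  shows "A ** matrix_inv A = mat 1"
  using someI_ex[OF assms[unfolded invertible_def]] unfolding matrix_inv_def by blast

lemma symmetric_matrix_inv:
  fixes A :: "real^'n^'n"
  assumes "transpose A = A" and "invertible A"
  shows "transpose (matrix_inv A) = matrix_inv A"
proof -
  have "transpose (matrix_inv A) ** A = mat 1"
    by (metis assms matrix_inv_right matrix_transpose_mul transpose_mat)
  then have "transpose (matrix_inv A) = transpose (matrix_inv A) ** (A ** matrix_inv A)"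
    using assms(2) by (simp add: matrix_inv_right)
  also have "\<dots> = matrix_inv A"
    by (simp add: matrix_mul_assoc \<open>transpose (matrix_inv A) ** A = mat 1\<close>)
  finally show ?thesis .
qed

lemma inner_matrix_vector_symmetric:
  fixes A :: "real^'n^'n"
  assumes "transpose A = A"
  shows "x \<bullet> (A *v y) = y \<bullet> (A *v x)"
  by (metis assms dot_lmul_matrix inner_commute transpose_matrix_vector)

lemma matrix_vector_mult_sum_rdistrib:
  "(\<Sum>i\<in>I. A i) *v x = (\<Sum>i\<in>I. A i *v x)"
  by (induction I rule: infinite_finite_induct) (simp_all add: matrix_vector_mult_add_rdistrib)

lemma transpose_add: "transpose (A + B) = transpose A + transpose B"
  by (simp add: transpose_def vec_eq_iff)

lemma transpose_sum: "transpose (\<Sum>i\<in>I. A i) = (\<Sum>i\<in>I. transpose (A i))"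
  by (induction I rule: infinite_finite_induct) (simp_all add: transpose_add transpose_def vec_eq_iff)

lemma pos_def_mat_invertible:
  assumes "pos_def_mat A"
  shows "invertible A"
proof -
  have "A *v x = 0 \<Longrightarrow> x = 0" for x
    using assms unfolding pos_def_mat_def by (metis inner_zero_right less_irrefl)
  then show ?thesis
    using matrix_left_invertible_ker invertible_left_inverse by blast
qed

lemma pos_def_mat_matrix_inv:
  fixes A :: "real^'n^'n"
  assumes "pos_def_mat A"
  shows "pos_def_mat (matrix_inv A)"
  unfolding pos_def_mat_def
proof (intro conjI allI impI)
  have inv: "invertible A" using assms by (rule pos_def_mat_invertible)
  show "transpose (matrix_inv A) = matrix_inv A"
    using assms inv symmetric_matrix_inv pos_def_mat_def by blast
  fix x :: "real^'n"
  assume "x \<noteq> 0"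
  define y where "y = matrix_inv A *v x"
  have x: "x = A *v y"
    unfolding y_def by (simp add: matrix_vector_mul_assoc matrix_inv_right inv)
  with \<open>x \<noteq> 0\<close> have "y \<noteq> 0" by auto
  then have "y \<bullet> (A *v y) > 0" using assms pos_def_mat_def by blast
  also have "y \<bullet> (A *v y) = x \<bullet> (matrix_inv A *v x)"
    by (simp add: y_def[symmetric] x[symmetric] inner_commute)
  finally show "x \<bullet> (matrix_inv A *v x) > 0" .
qed

lemma pos_def_mat_nonneg_combination:
  fixes A :: "'i \<Rightarrow> real^'n^'n"
  assumes "finite I" and "\<forall>j\<in>I. pos_def_mat (A j)" and "\<forall>j\<in>I. a j \<ge> 0"
    and "k \<in> I" and "a k > 0"
  shows "pos_def_mat (\<Sum>j\<in>I. a j *\<^sub>R A j)"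
  unfolding pos_def_mat_def
proof (intro conjI allI impI)
  show "transpose (\<Sum>j\<in>I. a j *\<^sub>R A j) = (\<Sum>j\<in>I. a j *\<^sub>R A j)"
    using assms(2) by (simp add: transpose_sum transpose_scalar pos_def_mat_def)
  fix x :: "real^'n"
  assume "x \<noteq> 0"
  then have pos: "x \<bullet> (A j *v x) > 0" if "j \<in> I" for j
    using assms(2) that pos_def_mat_def by blast
  have "0 < a k * (x \<bullet> (A k *v x))"
    using assms(4,5) pos by simp
  also have "\<dots> \<le> (\<Sum>j\<in>I. a j * (x \<bullet> (A j *v x)))"
  proof (rule member_le_sum)
    show "0 \<le> a j * (x \<bullet> (A j *v x))" if "j \<in> I - {k}" for j
      using that assms(3) pos[of j] by simp
  qed (use assms(1,4) in auto)
  also have "\<dots> = x \<bullet> ((\<Sum>j\<in>I. a j *\<^sub>R A j) *v x)"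
    by (simp add: matrix_vector_mult_sum_rdistrib scaleR_matrix_vector_assoc[symmetric]
        inner_sum_right)
  finally show "x \<bullet> ((\<Sum>j\<in>I. a j *\<^sub>R A j) *v x) > 0" .
qed

lemma pos_def_mat_convex_combination:
  fixes A B :: "real^'n^'n"
  assumes "pos_def_mat A" and "pos_def_mat B" and "0 \<le> t" and "t \<le> 1"
  shows "pos_def_mat ((1 - t) *\<^sub>R A + t *\<^sub>R B)"
  unfolding pos_def_mat_def
proof (intro conjI allI impI)
  show "transpose ((1 - t) *\<^sub>R A + t *\<^sub>R B) = (1 - t) *\<^sub>R A + t *\<^sub>R B"
    using assms(1,2) by (simp add: transpose_add transpose_scalar pos_def_mat_def)
  fix x :: "real^'n"
  assume "x \<noteq> 0"
  then have "x \<bullet> (A *v x) > 0" and "x \<bullet> (B *v x) > 0"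
    using assms(1,2) pos_def_mat_def by blast+
  then have "(1 - t) * (x \<bullet> (A *v x)) + t * (x \<bullet> (B *v x)) > 0"
    using assms(3,4) by (cases "t = 0") (auto intro: add_nonneg_pos mult_pos_pos)
  then show "x \<bullet> (((1 - t) *\<^sub>R A + t *\<^sub>R B) *v x) > 0"
    by (simp add: matrix_vector_mult_add_rdistrib scaleR_matrix_vector_assoc[symmetric]
        inner_add_right)
qed

lemma pos_def_mat_det_pos:
  fixes A :: "real^'n^'n"
  assumes "pos_def_mat A"
  shows "det A > 0"
proof (rule ccontr)
  assume "\<not> det A > 0"
  \<comment> \<open>det is 1 at the identity and never vanishes on the segment to A, which stays
     positive definite; the intermediate value theorem rules out a sign change.\<close>
  define f where "f t = det ((1 - t) *\<^sub>R mat 1 + t *\<^sub>R A)" for t :: real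
  have "continuous_on {0..1} f"
    unfolding f_def det_def by (intro continuous_intros)
  moreover have "f 0 = 1" and "f 1 \<le> 0"
    using \<open>\<not> det A > 0\<close> by (simp_all add: f_def)
  ultimately obtain t where "0 \<le> t" "t \<le> 1" "f t = 0"
    using IVT2'[of f 1 0 0] by auto
  moreover have "pos_def_mat (mat 1 :: real^'n^'n)"
    by (simp add: pos_def_mat_def)
  ultimately show False
    using pos_def_mat_convex_combination[OF _ assms] pos_def_mat_invertible invertible_det_nz
    unfolding f_def by blast
qed

lemma pos_def_mat_S_alpha:
  assumes "prob_simplex K a" and "\<forall>j<K. pos_def_mat (Sig j)"
  shows "pos_def_mat (S_alpha K a Sig)"
proof -
  obtain k where "k < K" and "a k > 0"
  proof (rule ccontr)
    assume "\<not> thesis"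
    then have "\<forall>j<K. a j = 0"
      using assms(1) that unfolding prob_simplex_def by force
    then show False
      using assms(1) unfolding prob_simplex_def by simp
  qed
  then show ?thesis
    using assms unfolding S_alpha_def prob_simplex_def
    by (intro pos_def_mat_nonneg_combination) (auto intro: pos_def_mat_matrix_inv)
qed

lemma ridge_v_weighted_sum:
  assumes "invertible (S_alpha K a Sig)"
  shows "(\<Sum>j<K. a j *\<^sub>R ridge_v K a mu Sig j) = 0"
proof -
  let ?x = "ridgeline K a mu Sig"
  have "S_alpha K a Sig *v ?x = (\<Sum>j<K. a j *\<^sub>R (matrix_inv (Sig j) *v mu j))"
    unfolding ridgeline_def
    by (simp add: matrix_vector_mul_assoc matrix_inv_right assms)
  moreover have "S_alpha K a Sig *v ?x = (\<Sum>j<K. a j *\<^sub>R (matrix_inv (Sig j) *v ?x))"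
    unfolding S_alpha_def
    by (simp add: matrix_vector_mult_sum_rdistrib scaleR_matrix_vector_assoc)
  ultimately show ?thesis
    unfolding ridge_v_def
    by (simp add: matrix_vector_mult_diff_distrib scaleR_diff_right sum_subtractf)
qed

lemma W_set_inner_ridge_v_eq:
  assumes "invertible (S_alpha K a Sig)" and "w \<in> W_set K a mu Sig" and "j < K"
  shows "w \<bullet> ridge_v K a mu Sig j = w \<bullet> ridge_v K a mu Sig (K - 1)"
proof (cases "j = K - 1")
  case False
  with assms(3) have "w \<bullet> (S_alpha K a Sig *v ridge_d K a mu Sig j) = 0"
    using assms(2) unfolding W_set_def by simp
  then show ?thesis
    unfolding ridge_d_def
    by (simp add: matrix_vector_mul_assoc matrix_inv_right assms(1) inner_diff_right)
qed simp

lemma W_set_orthogonal_ridge_v: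
  assumes "prob_simplex K a" and "invertible (S_alpha K a Sig)"
    and "w \<in> W_set K a mu Sig" and "j < K"
  shows "w \<bullet> ridge_v K a mu Sig j = 0"
proof -
  let ?c = "w \<bullet> ridge_v K a mu Sig (K - 1)"
  have "0 = w \<bullet> (\<Sum>i<K. a i *\<^sub>R ridge_v K a mu Sig i)"
    unfolding ridge_v_weighted_sum[OF assms(2)] by simp
  also have "\<dots> = (\<Sum>i<K. a i * ?c)"
    unfolding inner_sum_right inner_scaleR_right
    by (intro sum.cong refl) (metis W_set_inner_ridge_v_eq[OF assms(2,3)] lessThan_iff)
  also have "\<dots> = ?c"
    using assms(1) by (simp add: prob_simplex_def sum_distrib_right[symmetric])
  finally show ?thesis
    using W_set_inner_ridge_v_eq[OF assms(2-4)] by linarith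
qed

lemma quadratic_form_add_orthogonal:
  fixes A :: "real^'n^'n"
  assumes "transpose A = A" and "w \<bullet> (A *v u) = 0"
  shows "(u + t *\<^sub>R w) \<bullet> (A *v (u + t *\<^sub>R w)) = u \<bullet> (A *v u) + t\<^sup>2 * (w \<bullet> (A *v w))"
proof -
  have "u \<bullet> (A *v w) = 0"
    using assms inner_matrix_vector_symmetric by metis
  with assms(2) show ?thesis
    by (simp add: matrix_vector_right_distrib matrix_vector_mult_scaleR inner_add_left
        inner_add_right power2_eq_square)
qed

lemma normal_density_le_orthogonal_line:
  assumes "pos_def_mat Sig" and "w \<bullet> (matrix_inv Sig *v (x - mu)) = 0"
  shows "normal_density mu Sig (x + t *\<^sub>R w) \<le> normal_density mu Sig x"
proof -
  have pd: "pos_def_mat (matrix_inv Sig)"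
    using assms(1) by (rule pos_def_mat_matrix_inv)
  then have sym: "transpose (matrix_inv Sig) = matrix_inv Sig"
    unfolding pos_def_mat_def by blast
  have "w \<bullet> (matrix_inv Sig *v w) \<ge> 0"
    using pd unfolding pos_def_mat_def by (cases "w = 0") (auto intro: less_imp_le)
  have shift: "x + t *\<^sub>R w - mu = (x - mu) + t *\<^sub>R w"
    by simp
  have "(x - mu) \<bullet> (matrix_inv Sig *v (x - mu))
      \<le> (x + t *\<^sub>R w - mu) \<bullet> (matrix_inv Sig *v (x + t *\<^sub>R w - mu))"
    unfolding shift quadratic_form_add_orthogonal[OF sym assms(2)]
    using \<open>w \<bullet> (matrix_inv Sig *v w) \<ge> 0\<close> by simp
  \<comment> \<open>The normalising constant must be nonnegative: sqrt is odd on the reals.\<close>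
  moreover have "det Sig > 0"
    using assms(1) by (rule pos_def_mat_det_pos)
  ultimately show ?thesis
    unfolding normal_density_def by (intro divide_right_mono) auto
qed

theorem theorem2:
  fixes K :: nat and p alpha :: "nat \<Rightarrow> real"
    and mu :: "nat \<Rightarrow> real^'n" and Sig :: "nat \<Rightarrow> real^'n^'n" and w :: "real^'n"
  assumes "K \<ge> 2"
    and "\<forall>j<K. 0 \<le> p j \<and> p j \<le> 1" and "(\<Sum>j<K. p j) = 1"
    and "\<forall>j<K. pos_def_mat (Sig j)"
    and "prob_simplex K alpha"
    and "w \<in> W_set K alpha mu Sig"
  shows "\<forall>\<delta>::real.
           mixture_density K p mu Sig (ridgeline K alpha mu Sig + \<delta> *\<^sub>R w)
           \<le> mixture_density K p mu Sig (ridgeline K alpha mu Sig)"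
proof
  fix \<delta> :: real
  have "invertible (S_alpha K alpha Sig)"
    using pos_def_mat_S_alpha[OF assms(5,4)] by (rule pos_def_mat_invertible)
  then have "w \<bullet> (matrix_inv (Sig j) *v (ridgeline K alpha mu Sig - mu j)) = 0" if "j < K" for j
    using W_set_orthogonal_ridge_v[OF assms(5) _ assms(6) that] unfolding ridge_v_def by blast
  then have "normal_density (mu j) (Sig j) (ridgeline K alpha mu Sig + \<delta> *\<^sub>R w)
      \<le> normal_density (mu j) (Sig j) (ridgeline K alpha mu Sig)" if "j < K" for j
    using assms(4) that by (intro normal_density_le_orthogonal_line) auto
  then show "mixture_density K p mu Sig (ridgeline K alpha mu Sig + \<delta> *\<^sub>R w)
      \<le> mixture_density K p mu Sig (ridgeline K alpha mu Sig)"
    using assms(2) unfolding mixture_density_def by (intro sum_mono mult_left_mono) auto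
qed

end
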